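(* Under Assumptions 1–4 below, with $\tau\in(0,1]$ and $p\in(0,1]$, the iterates of Algorithm 2Direction satisfy, for every $t\ge0$, $$\begin{aligned}\mathbb E_t\|v^{t+1}-\nabla f(z^{t+1})\|^2&\le\Big(1-\frac\tau2\Big)\|v^t-\nabla f(z^t)\|^2+\frac{2\tau^2\omega}{n^2}\sum_{i=1}^n\|h_i^t-\nabla f_i(z^t)\|^2\\&\quad+\Big(4p\Big(1+\frac{2p}{\tau}\Big)L+\frac{8p\tau^2\omega L_{\max}}{n}\Big)D_f(z^t,y^{t+1})+\Big(2p\Big(1+\frac{2p}{\tau}\Big)L^2+\frac{4p\tau^2\omega\widehat L^2}{n}\Big)\mathbb E_t\|x^{t+1}-y^{t+1}\|^2,\end{aligned}$$ where $D_f(x,y)=f(x)-f(y)-\langle\nabla f(y),x-y\rangle$.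
   Context: Setting: $f=\frac1n\sum_{i=1}^nf_i$, $f_i:\mathbb R^d\to\mathbb R$. Assumption 1: each $f_i$ is $L_i$-smooth, $L_{\max}=\max_iL_i$, and $\widehat L>0$ satisfies $\frac1n\sum_i\|\nabla f_i(x)-\nabla f_i(y)\|^2\le\widehat L^2\|x-y\|^2$ for all $x,y$. Assumption 2: $f$ is $L$-smooth. Assumption 3: each $f_i$ is convex and $f$ is $\mu$-strongly convex ($\mu\ge0$) with minimizer $x^*$. Assumption 4: the randomness of all compressors is drawn independently (of each other, of the coins $c^t$, and of the past). Compressor classes: $\mathbb U(\omega)$ ($\omega\ge0$) = stochastic maps $\mathcal C$ with $\mathbb E\mathcal C(x)=x$, $\mathbb E\|\mathcal C(x)-x\|^2\le\omega\|x\|^2$; $\mathbb B(\alpha)$ ($\alpha\in(0,1]$) = possibly stochastic maps with $\mathbb E\|\mathcal C(x)-x\|^2\le(1-\alpha)\|x\|^2$. Algorithm 2Direction: compressors $\mathcal C_i^{D,y},\mathcal C_i^{D,z}\in\mathbb U(\omega)$ (workers), $\mathcal C^P\in\mathbb B(\alpha)$ (server); parameters $\bar L>0$, $\mu\ge0$, $p\in(0,1]$, $\Gamma_0\ge1$, $\tau\in(0,1]$, $x^0,h_1^0,\dots,h_n^0,k^0,v^0\in\mathbb R^d$. Set $\beta=1/(\omega+1)$, $w^0=z^0=u^0=x^0$, $h^0=\frac1n\sum_ih_i^0$, $\theta_{\min}=\frac14\min\{1,\alpha/p,\tau/p,\beta/p\}$. For $t=0,1,\dots$: let $\bar\theta_{t+1}$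 be the largest root of $p\bar L\Gamma_t\theta^2+p(\bar L+\Gamma_t\mu)\theta-(\bar L+\Gamma_t\mu)=0$, $\theta_{t+1}=\min\{\bar\theta_{t+1},\theta_{\min}\}$, $\gamma_{t+1}=p\theta_{t+1}\Gamma_t/(1-p\theta_{t+1})$, $\Gamma_{t+1}=\Gamma_t+\gamma_{t+1}$; $y^{t+1}=\theta_{t+1}w^t+(1-\theta_{t+1})z^t$; $m_i^{t,y}=\mathcal C_i^{D,y}(\nabla f_i(y^{t+1})-h_i^t)$; $g^{t+1}=h^t+\frac1n\sum_im_i^{t,y}$; $u^{t+1}=\arg\min_x\{\langle g^{t+1},x\rangle+\frac{\bar L+\Gamma_t\mu}{2\gamma_{t+1}}\|x-u^t\|^2+\frac\mu2\|x-y^{t+1}\|^2\}$; $q^{t+1}=\arg\min_x\{\langle k^t,x\rangle+\frac{\bar L+\Gamma_t\mu}{2\gamma_{t+1}}\|x-w^t\|^2+\frac\mu2\|x-y^{t+1}\|^2\}$; $w^{t+1}=q^{t+1}+\mathcal C^P(u^{t+1}-q^{t+1})$; $x^{t+1}=\theta_{t+1}u^{t+1}+(1-\theta_{t+1})z^t$; draw $c^t\sim\mathrm{Bernoulli}(p)$, and set $(k^{t+1},z^{t+1})=(v^t,x^{t+1})$ if $c^t=1$, $(k^{t+1},z^{t+1})=(k^t,z^t)$ if $c^t=0$; $m_i^{t,z}=\mathcal C_i^{D,z}(\nabla f_i(z^{t+1})-h_i^t)$; $h_i^{t+1}=h_i^t+\beta m_i^{t,z}$; $v^{t+1}=(1-\tau)v^t+\tau(h^t+\frac1n\sum_im_i^{t,z})$;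 $h^{t+1}=h^t+\frac\beta n\sum_im_i^{t,z}$. $\mathbb E_t$ denotes conditional expectation given the randomness of the first $t$ iterations. *)

theory Defs
  imports "HOL-Probability.Probability"
begin

definition lsmooth :: "real \<Rightarrow> ('a::euclidean_space \<Rightarrow> real) \<Rightarrow> ('a \<Rightarrow> 'a) \<Rightarrow> bool" where
  "lsmooth L f g \<longleftrightarrow>
     (\<forall>x. (f has_derivative (\<lambda>h. g x \<bullet> h)) (at x)) \<and>
     (\<forall>x y. norm (g x - g y) \<le> L * norm (x - y))"

definition strongly_convex :: "real \<Rightarrow> ('a::real_normed_vector \<Rightarrow> real) \<Rightarrow> bool" where
  "strongly_convex mu f \<longleftrightarrow>
     (\<forall>x y (t::real). 0 \<le> t \<longrightarrow> t \<le> 1 \<longrightarrow>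
        f (t *\<^sub>R x + (1 - t) *\<^sub>R y) \<le> t * f x + (1 - t) * f y - mu / 2 * t * (1 - t) * (norm (x - y))\<^sup>2)"

definition bregman :: "('a::euclidean_space \<Rightarrow> real) \<Rightarrow> ('a \<Rightarrow> 'a) \<Rightarrow> 'a \<Rightarrow> 'a \<Rightarrow> real" where
  "bregman f g x y = f x - f y - g y \<bullet> (x - y)"

text \<open>A stochastic map is represented by a (jointly measurable) map C :: seed => R^d => R^d
  together with a probability distribution S of its random seed.\<close>

definition unbiased_compressor :: "real \<Rightarrow> 's measure \<Rightarrow> ('s \<Rightarrow> 'a::euclidean_space \<Rightarrow> 'a) \<Rightarrow> bool" where
  "unbiased_compressor \<omega> S C \<longleftrightarrow> 0 \<le> \<omega> \<and> prob_space S \<and>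
     (\<lambda>(s, x). C s x) \<in> borel_measurable (S \<Otimes>\<^sub>M borel) \<and>
     (\<forall>x. integrable S (\<lambda>s. C s x) \<and> (\<integral>s. C s x \<partial>S) = x \<and>
          (\<integral>\<^sup>+ s. ennreal ((norm (C s x - x))\<^sup>2) \<partial>S) \<le> ennreal (\<omega> * (norm x)\<^sup>2))"

definition contractive_compressor :: "real \<Rightarrow> 's measure \<Rightarrow> ('s \<Rightarrow> 'a::euclidean_space \<Rightarrow> 'a) \<Rightarrow> bool" where
  "contractive_compressor \<alpha> S C \<longleftrightarrow> 0 < \<alpha> \<and> \<alpha> \<le> 1 \<and> prob_space S \<and>
     (\<lambda>(s, x). C s x) \<in> borel_measurable (S \<Otimes>\<^sub>M borel) \<and>
     (\<forall>x. (\<integral>\<^sup>+ s. ennreal ((norm (C s x - x))\<^sup>2) \<partial>S) \<le> ennreal ((1 - \<alpha>) * (norm x)\<^sup>2))"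

record ('a, 's) alg_params =
  a_n :: nat
  a_grad :: "nat \<Rightarrow> 'a \<Rightarrow> 'a"
  a_Lbar :: real
  a_mu :: real
  a_p :: real
  a_Gamma0 :: real
  a_tau :: real
  a_omega :: real
  a_alpha :: real
  a_x0 :: 'a
  a_h0 :: "nat \<Rightarrow> 'a"
  a_k0 :: 'a
  a_v0 :: 'a
  a_Cy :: "nat \<Rightarrow> 's \<Rightarrow> 'a \<Rightarrow> 'a"
  a_Cz :: "nat \<Rightarrow> 's \<Rightarrow> 'a \<Rightarrow> 'a"
  a_CP :: "'s \<Rightarrow> 'a \<Rightarrow> 'a"

record 'a alg_state =
  st_w :: 'a
  st_z :: 'a
  st_u :: 'a
  st_h :: "nat \<Rightarrow> 'a"
  st_hb :: 'a
  st_k :: 'a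
  st_v :: 'a

text \<open>Randomness of one iteration: seeds of C_i^{D,y} (i<n), seeds of C_i^{D,z} (i<n),
  seed of C^P, and the coin c^t.\<close>
type_synonym 's seed = "(nat \<Rightarrow> 's) \<times> (nat \<Rightarrow> 's) \<times> 's \<times> bool"

definition seed_measure :: "nat \<Rightarrow> (nat \<Rightarrow> 's measure) \<Rightarrow> (nat \<Rightarrow> 's measure) \<Rightarrow> 's measure \<Rightarrow> real
    \<Rightarrow> 's seed measure" where
  "seed_measure n Sy Sz SP p =
     PiM {..<n} Sy \<Otimes>\<^sub>M (PiM {..<n} Sz \<Otimes>\<^sub>M (SP \<Otimes>\<^sub>M measure_pmf (bernoulli_pmf p)))"

definition alg_beta :: "('a, 's) alg_params \<Rightarrow> real" where
  "alg_beta P = 1 / (a_omega P + 1)"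

definition theta_min :: "('a, 's) alg_params \<Rightarrow> real" where
  "theta_min P = 1/4 * min 1 (min (a_alpha P / a_p P) (min (a_tau P / a_p P) (alg_beta P / a_p P)))"

definition theta_bar :: "('a, 's) alg_params \<Rightarrow> real \<Rightarrow> real" where
  "theta_bar P G = (GREATEST \<theta>::real.
      a_p P * a_Lbar P * G * \<theta>\<^sup>2 + a_p P * (a_Lbar P + G * a_mu P) * \<theta> - (a_Lbar P + G * a_mu P) = 0)"

definition theta_next :: "('a, 's) alg_params \<Rightarrow> real \<Rightarrow> real" where
  "theta_next P G = min (theta_bar P G) (theta_min P)"

definition gamma_next :: "('a, 's) alg_params \<Rightarrow> real \<Rightarrow> real" where
  "gamma_next P G = a_p P * theta_next P G * G / (1 - a_p P * theta_next P G)"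

primrec Gam :: "('a, 's) alg_params \<Rightarrow> nat \<Rightarrow> real" where
  "Gam P 0 = a_Gamma0 P"
| "Gam P (Suc t) = Gam P t + gamma_next P (Gam P t)"

text \<open>theta_{t+1}, gamma_{t+1}\<close>
definition alg_theta :: "('a, 's) alg_params \<Rightarrow> nat \<Rightarrow> real" where
  "alg_theta P t = theta_next P (Gam P t)"

definition alg_gamma :: "('a, 's) alg_params \<Rightarrow> nat \<Rightarrow> real" where
  "alg_gamma P t = gamma_next P (Gam P t)"

text \<open>y^{t+1}, computed from the state at time t\<close>
definition alg_y :: "('a::euclidean_space, 's) alg_params \<Rightarrow> nat \<Rightarrow> 'a alg_state \<Rightarrow> 'a" where
  "alg_y P t st = alg_theta P t *\<^sub>R st_w st + (1 - alg_theta P t) *\<^sub>R st_z st"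

definition alg_g :: "('a::euclidean_space, 's) alg_params \<Rightarrow> nat \<Rightarrow> 'a alg_state \<Rightarrow> 's seed \<Rightarrow> 'a" where
  "alg_g P t st \<xi> =
     (let y = alg_y P t st; sy = fst \<xi>
      in st_hb st + (1 / real (a_n P)) *\<^sub>R (\<Sum>i<a_n P. a_Cy P i (sy i) (a_grad P i y - st_h st i)))"

definition alg_u :: "('a::euclidean_space, 's) alg_params \<Rightarrow> nat \<Rightarrow> 'a alg_state \<Rightarrow> 's seed \<Rightarrow> 'a" where
  "alg_u P t st \<xi> =
     (let y = alg_y P t st; g = alg_g P t st \<xi>; A = a_Lbar P + Gam P t * a_mu P; ga = alg_gamma P t
      in arg_min (\<lambda>x. g \<bullet> x + A / (2 * ga) * (norm (x - st_u st))\<^sup>2 + a_mu P / 2 * (norm (x - y))\<^sup>2)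
                 (\<lambda>_. True))"

definition alg_q :: "('a::euclidean_space, 's) alg_params \<Rightarrow> nat \<Rightarrow> 'a alg_state \<Rightarrow> 'a" where
  "alg_q P t st =
     (let y = alg_y P t st; A = a_Lbar P + Gam P t * a_mu P; ga = alg_gamma P t
      in arg_min (\<lambda>x. st_k st \<bullet> x + A / (2 * ga) * (norm (x - st_w st))\<^sup>2 + a_mu P / 2 * (norm (x - y))\<^sup>2)
                 (\<lambda>_. True))"

definition alg_x :: "('a::euclidean_space, 's) alg_params \<Rightarrow> nat \<Rightarrow> 'a alg_state \<Rightarrow> 's seed \<Rightarrow> 'a" where
  "alg_x P t st \<xi> = alg_theta P t *\<^sub>R alg_u P t st \<xi> + (1 - alg_theta P t) *\<^sub>R st_z st"

definition alg_step :: "('a::euclidean_space, 's) alg_params \<Rightarrow> nat \<Rightarrow> 'a alg_state \<Rightarrow> 's seed \<Rightarrow> 'a alg_state" where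
  "alg_step P t st \<xi> =
     (case \<xi> of (sy, sz, sP, c) \<Rightarrow>
      let n = a_n P; \<beta> = alg_beta P; \<tau> = a_tau P;
          u' = alg_u P t st \<xi>;
          q' = alg_q P t st;
          w' = q' + a_CP P sP (u' - q');
          x' = alg_x P t st \<xi>;
          k' = (if c then st_v st else st_k st);
          z' = (if c then x' else st_z st);
          mz = (\<lambda>i. a_Cz P i (sz i) (a_grad P i z' - st_h st i))
      in \<lparr> st_w = w', st_z = z', st_u = u',
           st_h = (\<lambda>i. st_h st i + \<beta> *\<^sub>R mz i),
           st_hb = st_hb st + (\<beta> / real n) *\<^sub>R (\<Sum>i<n. mz i),
           st_k = k',
           st_v = (1 - \<tau>) *\<^sub>R st_v st + \<tau> *\<^sub>R (st_hb st + (1 / real n) *\<^sub>R (\<Sum>i<n. mz i)) \<rparr>)"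

definition alg_init :: "('a::euclidean_space, 's) alg_params \<Rightarrow> 'a alg_state" where
  "alg_init P = \<lparr> st_w = a_x0 P, st_z = a_x0 P, st_u = a_x0 P, st_h = a_h0 P,
     st_hb = (1 / real (a_n P)) *\<^sub>R (\<Sum>i<a_n P. a_h0 P i), st_k = a_k0 P, st_v = a_v0 P \<rparr>"

text \<open>State at time t, given the realised randomness hist 0, ..., hist (t-1) of the first t iterations.\<close>
primrec alg_run :: "('a::euclidean_space, 's) alg_params \<Rightarrow> nat \<Rightarrow> (nat \<Rightarrow> 's seed) \<Rightarrow> 'a alg_state" where
  "alg_run P 0 hist = alg_init P"
| "alg_run P (Suc t) hist = alg_step P t (alg_run P t hist) (hist t)"

end

theory Submission
  imports Defs
begin

text \<open>Condition on the seeds of the compressors C_i^{D,y}; they determine x^{t+1}, while the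
  remaining randomness (seeds of C_i^{D,z}, of C^P, and the coin) is independent of them.
  Given z^{t+1} = z, the error v^{t+1} - \<nabla>f(z) is (1 - \<tau>)(v^t - \<nabla>f(z)) plus \<tau>/n times a sum of
  independent centred compressor errors, so its second moment is at most
  (1 - \<tau>)^2 |v^t - \<nabla>f(z)|^2 + \<tau>^2 \<omega>/n^2 \<Sum>|\<nabla>f_i(z) - h_i^t|^2.
  The coin makes z = x^{t+1} with probability p and z = z^t otherwise. The x^{t+1}-terms are
  moved to z^t by Young's inequality and the co-coercivity bound
  |\<nabla>f(z) - \<nabla>f(y)|^2 \<le> 2L D_f(z,y) of convex L-smooth functions, centred at y = y^{t+1};
  what is left over are the terms in |x^{t+1} - y^{t+1}|^2.\<close>

section \<open>Convex smooth functions\<close>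

lemma norm_add_sq_le_weighted:
  fixes a b :: "'a::real_inner"
  assumes s: "0 < s"
  shows "(norm (a + b))\<^sup>2 \<le> (1 + s) * (norm a)\<^sup>2 + (1 + 1 / s) * (norm b)\<^sup>2"
proof -
  have expand: "(norm (a + b))\<^sup>2 = (norm a)\<^sup>2 + 2 * (a \<bullet> b) + (norm b)\<^sup>2"
    by (simp add: power2_norm_eq_inner inner_add_left inner_add_right inner_commute)
  have "0 \<le> (s * norm a - norm b)\<^sup>2 / s" using s by simp
  also have "\<dots> = s * (norm a)\<^sup>2 + (norm b)\<^sup>2 / s - 2 * (norm a * norm b)"
    using s by (simp add: field_simps power2_eq_square)
  finally have "2 * (norm a * norm b) \<le> s * (norm a)\<^sup>2 + (norm b)\<^sup>2 / s" by simp
  with norm_cauchy_schwarz[of a b] show ?thesis unfolding expand by (simp add: algebra_simps)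
qed

lemma norm_add_sq_le_double:
  fixes a b :: "'a::real_inner"
  shows "(norm (a + b))\<^sup>2 \<le> 2 * (norm a)\<^sup>2 + 2 * (norm b)\<^sup>2"
  using norm_add_sq_le_weighted[of 1 a b] by simp

lemma has_real_derivative_along_line:
  fixes f :: "'a::euclidean_space \<Rightarrow> real"
  assumes "\<forall>x. (f has_derivative (\<lambda>h. g x \<bullet> h)) (at x)"
  shows "((\<lambda>s. f (x + s *\<^sub>R d)) has_real_derivative (g (x + s *\<^sub>R d) \<bullet> d)) (at s)"
proof -
  have line: "((\<lambda>s. x + s *\<^sub>R d) has_derivative (\<lambda>h. h *\<^sub>R d)) (at s)"
    by (auto intro!: derivative_eq_intros)
  have "((\<lambda>s. f (x + s *\<^sub>R d)) has_derivative (\<lambda>h. g (x + s *\<^sub>R d) \<bullet> (h *\<^sub>R d))) (at s)"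
    using has_derivative_compose[OF line spec[OF assms, of "x + s *\<^sub>R d"]] by simp
  moreover have "(\<lambda>h. g (x + s *\<^sub>R d) \<bullet> (h *\<^sub>R d)) = (*) (g (x + s *\<^sub>R d) \<bullet> d)"
    by (auto simp: mult.commute)
  ultimately show ?thesis by (simp add: has_field_derivative_def)
qed

lemma convex_on_gradient_ineq:
  fixes f :: "'a::euclidean_space \<Rightarrow> real"
  assumes cvx: "convex_on UNIV f" and der: "\<forall>x. (f has_derivative (\<lambda>h. g x \<bullet> h)) (at x)"
  shows "f x + g x \<bullet> (y - x) \<le> f y"
proof -
  define \<psi> where "\<psi> = (\<lambda>s::real. f (x + s *\<^sub>R (y - x)))"
  have "convex_on UNIV \<psi>"
  proof (rule convex_onI)
    fix t a b :: real assume "0 < t" "t < 1"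
    have "x + ((1 - t) *\<^sub>R a + t *\<^sub>R b) *\<^sub>R (y - x)
        = (1 - t) *\<^sub>R (x + a *\<^sub>R (y - x)) + t *\<^sub>R (x + b *\<^sub>R (y - x))"
      by (simp add: algebra_simps)
    then show "\<psi> ((1 - t) *\<^sub>R a + t *\<^sub>R b) \<le> (1 - t) * \<psi> a + t * \<psi> b"
      unfolding \<psi>_def using convex_onD[OF cvx, of t] \<open>0 < t\<close> \<open>t < 1\<close> by simp
  qed simp
  moreover have "(\<psi> has_real_derivative (g x \<bullet> (y - x))) (at 0 within UNIV)"
    unfolding \<psi>_def using has_real_derivative_along_line[OF der, of x "y - x" 0] by simp
  ultimately have "\<psi> 1 - \<psi> 0 \<ge> (g x \<bullet> (y - x)) * (1 - 0)"
    by (intro convex_on_imp_above_tangent) auto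
  then show ?thesis unfolding \<psi>_def by simp
qed

lemma bregman_nonneg:
  fixes f :: "'a::euclidean_space \<Rightarrow> real"
  assumes "convex_on UNIV f" and "lsmooth L f g"
  shows "0 \<le> bregman f g x y"
  using convex_on_gradient_ineq[OF assms(1), of g y x] assms(2)
  by (simp add: lsmooth_def bregman_def)

lemma bregman_average:
  "bregman (\<lambda>x. (1 / real n) * (\<Sum>i<n. fi i x)) (\<lambda>x. (1 / real n) *\<^sub>R (\<Sum>i<n. gf i x)) z y
     = (1 / real n) * (\<Sum>i<n. bregman (fi i) (gf i) z y)"
  by (simp add: bregman_def inner_sum_left sum_subtractf right_diff_distrib)

lemma strongly_convex_imp_convex_on:
  assumes "0 \<le> mu" and "strongly_convex mu f"
  shows "convex_on UNIV f"
proof (rule convex_onI)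
  fix x y and t :: real assume t: "0 < t" "t < 1"
  have "f ((1 - t) *\<^sub>R x + (1 - (1 - t)) *\<^sub>R y)
      \<le> (1 - t) * f x + (1 - (1 - t)) * f y - mu / 2 * (1 - t) * (1 - (1 - t)) * (norm (x - y))\<^sup>2"
    using assms(2)[unfolded strongly_convex_def, rule_format, of "1 - t" x y] t by simp
  moreover have "0 \<le> mu / 2 * (1 - t) * (1 - (1 - t)) * (norm (x - y))\<^sup>2"
    using assms(1) t by simp
  ultimately show "f ((1 - t) *\<^sub>R x + t *\<^sub>R y) \<le> (1 - t) * f x + t * f y" by simp
qed simp

lemma lsmooth_nonneg:
  fixes f :: "'a::euclidean_space \<Rightarrow> real"
  assumes "lsmooth L f g"
  shows "0 \<le> L"
proof -
  obtain b :: 'a where b: "b \<in> Basis" using nonempty_Basis by blast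
  have "norm (g b - g 0) \<le> L * norm (b - 0)" using assms unfolding lsmooth_def by blast
  with b show ?thesis by (metis diff_zero norm_Basis mult.right_neutral norm_ge_zero order_trans)
qed

lemma lsmooth_descent:
  fixes f :: "'a::euclidean_space \<Rightarrow> real"
  assumes "lsmooth L f g"
  shows "f (x + d) \<le> f x + g x \<bullet> d + L / 2 * (norm d)\<^sup>2"
proof -
  have der: "\<forall>x. (f has_derivative (\<lambda>h. g x \<bullet> h)) (at x)"
    and lip: "\<forall>x y. norm (g x - g y) \<le> L * norm (x - y)"
    using assms by (auto simp: lsmooth_def)
  define \<phi> where "\<phi> = (\<lambda>s::real. f (x + s *\<^sub>R d) - s * (g x \<bullet> d) - L / 2 * s\<^sup>2 * (norm d)\<^sup>2)"
  have "\<phi> 1 \<le> \<phi> 0"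
  proof (rule DERIV_nonpos_imp_nonincreasing[of 0 1])
    fix s :: real assume s: "0 \<le> s" "s \<le> 1"
    have "(\<phi> has_real_derivative (g (x + s *\<^sub>R d) \<bullet> d - g x \<bullet> d - L / 2 * (2 * s) * (norm d)\<^sup>2)) (at s)"
      unfolding \<phi>_def
      by (intro derivative_eq_intros) (auto simp: power2_eq_square intro: has_real_derivative_along_line[OF der])
    moreover have "g (x + s *\<^sub>R d) \<bullet> d - g x \<bullet> d \<le> L * s * (norm d)\<^sup>2"
    proof -
      have "g (x + s *\<^sub>R d) \<bullet> d - g x \<bullet> d \<le> norm (g (x + s *\<^sub>R d) - g x) * norm d"
        by (metis inner_diff_left norm_cauchy_schwarz)
      also have "\<dots> \<le> L * norm (s *\<^sub>R d) * norm d"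
        using lip[rule_format, of "x + s *\<^sub>R d" x] by (intro mult_right_mono) auto
      also have "\<dots> = L * s * (norm d)\<^sup>2" using s by (simp add: power2_eq_square)
      finally show ?thesis .
    qed
    ultimately show "\<exists>y. (\<phi> has_real_derivative y) (at s) \<and> y \<le> 0" by force
  qed simp
  then show ?thesis unfolding \<phi>_def by simp
qed

text \<open>Compare the lower bound from convexity at y with the upper bound from the descent lemma
  at x, both evaluated at the gradient step w = x - (g x - g y) / L.\<close>
lemma lsmooth_cocoercive:
  fixes f :: "'a::euclidean_space \<Rightarrow> real"
  assumes cvx: "convex_on UNIV f" and sm: "lsmooth L f g"
  shows "(norm (g x - g y))\<^sup>2 \<le> 2 * L * bregman f g x y"
proof (cases "L = 0")
  case True
  then have "g x = g y" using sm unfolding lsmooth_def by (metis mult_zero_left norm_le_zero_iff right_minus_eq)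
  then show ?thesis using True by simp
next
  case False
  with lsmooth_nonneg[OF sm] have L: "0 < L" by simp
  have der: "\<forall>x. (f has_derivative (\<lambda>h. g x \<bullet> h)) (at x)" using sm by (simp add: lsmooth_def)
  define v where "v = g x - g y"
  define w where "w = x - (1 / L) *\<^sub>R v"
  have "f y + g y \<bullet> (w - y) \<le> f w" by (rule convex_on_gradient_ineq[OF cvx der])
  also have "f w \<le> f x + g x \<bullet> (w - x) + L / 2 * (norm (w - x))\<^sup>2"
    using lsmooth_descent[OF sm, of x "w - x"] by simp
  finally have "f y + g y \<bullet> (x - y) - (1 / L) * (g y \<bullet> v)
      \<le> f x - (1 / L) * (g x \<bullet> v) + L / 2 * (norm v / L)\<^sup>2"
    using L by (simp add: w_def algebra_simps)
  moreover have "(1 / L) * (g x \<bullet> v) = (1 / L) * (g y \<bullet> v) + (norm v)\<^sup>2 / L"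
    by (simp add: v_def power2_norm_eq_inner inner_diff_left diff_divide_distrib)
  moreover have "L / 2 * (norm v / L)\<^sup>2 = (norm v)\<^sup>2 / L / 2"
    using L by (simp add: power2_eq_square)
  ultimately have "(norm v)\<^sup>2 / L / 2 \<le> bregman f g x y"
    unfolding bregman_def by linarith
  then show ?thesis using L by (simp add: v_def field_simps)
qed

lemma gradient_diff_sq_le_bregman:
  fixes f :: "'a::euclidean_space \<Rightarrow> real"
  assumes "convex_on UNIV f" and "lsmooth L f g"
  shows "(norm (g z - g x))\<^sup>2 \<le> 4 * L * bregman f g z y + 2 * (norm (g x - g y))\<^sup>2"
proof -
  have "(norm (g z - g x))\<^sup>2 \<le> 2 * (norm (g z - g y))\<^sup>2 + 2 * (norm (g y - g x))\<^sup>2"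
    using norm_add_sq_le_double[of "g z - g y" "g y - g x"] by simp
  then show ?thesis using lsmooth_cocoercive[OF assms, of z y] by (simp add: norm_minus_commute)
qed

section \<open>Second moment of the momentum error\<close>

text \<open>The bound on the second moment of v^{t+1} - \<nabla>f(z^{t+1}) given z^{t+1} = z.\<close>
definition compressed_momentum_error ::
    "nat \<Rightarrow> (nat \<Rightarrow> 'a \<Rightarrow> 'a::real_normed_vector) \<Rightarrow> real \<Rightarrow> real \<Rightarrow> 'a \<Rightarrow> (nat \<Rightarrow> 'a) \<Rightarrow> 'a \<Rightarrow> real" where
  "compressed_momentum_error n gf \<tau> \<omega> v h z =
     (1 - \<tau>)\<^sup>2 * (norm (v - (1 / real n) *\<^sub>R (\<Sum>i<n. gf i z)))\<^sup>2
     + \<tau>\<^sup>2 * \<omega> / (real n)\<^sup>2 * (\<Sum>i<n. (norm (gf i z - h i))\<^sup>2)"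

lemma compressed_momentum_error_nonneg:
  "0 \<le> \<omega> \<Longrightarrow> 0 \<le> compressed_momentum_error n gf \<tau> \<omega> v h z"
  unfolding compressed_momentum_error_def by (intro add_nonneg_nonneg mult_nonneg_nonneg sum_nonneg) auto

lemma sum_gradient_residual_sq_le:
  fixes gf :: "nat \<Rightarrow> 'a::euclidean_space \<Rightarrow> 'a"
  assumes smooth: "\<forall>i<n. lsmooth (Li i) (fi i) (gf i)" and convex: "\<forall>i<n. convex_on UNIV (fi i)"
    and Lmax: "\<forall>i<n. Li i \<le> Lmax"
    and Lhat: "(1 / real n) * (\<Sum>i<n. (norm (gf i x - gf i y))\<^sup>2) \<le> Lhat\<^sup>2 * (norm (x - y))\<^sup>2"
    and n: "1 \<le> n"
  shows "(\<Sum>i<n. (norm (gf i x - h i))\<^sup>2)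
    \<le> 2 * (\<Sum>i<n. (norm (gf i z - h i))\<^sup>2) + 8 * Lmax * (\<Sum>i<n. bregman (fi i) (gf i) z y)
       + 4 * real n * Lhat\<^sup>2 * (norm (x - y))\<^sup>2"
proof -
  have "(norm (gf i x - h i))\<^sup>2
      \<le> 2 * (norm (gf i z - h i))\<^sup>2 + 8 * Lmax * bregman (fi i) (gf i) z y + 4 * (norm (gf i x - gf i y))\<^sup>2"
    if i: "i < n" for i
  proof -
    have cvx: "convex_on UNIV (fi i)" and sm: "lsmooth (Li i) (fi i) (gf i)" using i convex smooth by auto
    have "(norm (gf i x - h i))\<^sup>2 \<le> 2 * (norm (gf i z - h i))\<^sup>2 + 2 * (norm (gf i z - gf i x))\<^sup>2"
      using norm_add_sq_le_double[of "gf i z - h i" "gf i x - gf i z"] by (simp add: norm_minus_commute)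
    moreover have "(norm (gf i z - gf i x))\<^sup>2
        \<le> 4 * Li i * bregman (fi i) (gf i) z y + 2 * (norm (gf i x - gf i y))\<^sup>2"
      by (rule gradient_diff_sq_le_bregman[OF cvx sm])
    moreover have "Li i * bregman (fi i) (gf i) z y \<le> Lmax * bregman (fi i) (gf i) z y"
      using Lmax i by (intro mult_right_mono bregman_nonneg[OF cvx sm]) auto
    ultimately show ?thesis by linarith
  qed
  then have "(\<Sum>i<n. (norm (gf i x - h i))\<^sup>2)
      \<le> (\<Sum>i<n. 2 * (norm (gf i z - h i))\<^sup>2 + 8 * Lmax * bregman (fi i) (gf i) z y
                 + 4 * (norm (gf i x - gf i y))\<^sup>2)"
    by (intro sum_mono) simp
  also have "\<dots> = 2 * (\<Sum>i<n. (norm (gf i z - h i))\<^sup>2) + 8 * Lmax * (\<Sum>i<n. bregman (fi i) (gf i) z y)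
      + 4 * (\<Sum>i<n. (norm (gf i x - gf i y))\<^sup>2)"
    by (simp add: sum.distrib sum_distrib_left)
  finally have "(\<Sum>i<n. (norm (gf i x - h i))\<^sup>2)
      \<le> 2 * (\<Sum>i<n. (norm (gf i z - h i))\<^sup>2) + 8 * Lmax * (\<Sum>i<n. bregman (fi i) (gf i) z y)
         + 4 * (\<Sum>i<n. (norm (gf i x - gf i y))\<^sup>2)" .
  moreover have "(\<Sum>i<n. (norm (gf i x - gf i y))\<^sup>2) \<le> real n * (Lhat\<^sup>2 * (norm (x - y))\<^sup>2)"
    using mult_left_mono[OF Lhat, of "real n"] n by simp
  ultimately show ?thesis by linarith
qed

lemma young_mixture_arith:
  fixes p \<tau> A Ax B L D d :: real
  assumes p: "0 < p" "p \<le> 1" and \<tau>: "0 < \<tau>" "\<tau> \<le> 1" and A: "0 \<le> A" and B: "0 \<le> B"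
    and hAx: "Ax \<le> (1 + \<tau> / (2 * p)) * A + (1 + 2 * p / \<tau>) * B"
    and hB: "B \<le> 4 * L * D + 2 * L\<^sup>2 * d"
  shows "p * ((1 - \<tau>)\<^sup>2 * Ax) + (1 - p) * ((1 - \<tau>)\<^sup>2 * A)
    \<le> (1 - \<tau> / 2) * A + 4 * p * (1 + 2 * p / \<tau>) * L * D + 2 * p * (1 + 2 * p / \<tau>) * L\<^sup>2 * d"
proof -
  define cB where "cB = p * (1 + 2 * p / \<tau>)"
  have cB: "0 \<le> cB" using p \<tau> by (simp add: cB_def)
  have "p * Ax \<le> p * ((1 + \<tau> / (2 * p)) * A + (1 + 2 * p / \<tau>) * B)"
    using hAx p by simp
  also have "\<dots> = (p + \<tau> / 2) * A + cB * B" using p by (simp add: cB_def field_simps)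
  finally have pAx: "p * Ax \<le> (p + \<tau> / 2) * A + cB * B" .
  have contraction: "(1 - \<tau>)\<^sup>2 * (1 + \<tau> / 2) \<le> 1 - \<tau> / 2"
  proof -
    have "(1 - \<tau>)\<^sup>2 * (1 + \<tau> / 2) = 1 - \<tau> / 2 - \<tau> * (2 - \<tau>\<^sup>2) / 2"
      by (simp add: power2_eq_square field_simps)
    moreover have "\<tau>\<^sup>2 \<le> 1" using \<tau> by (simp add: power_le_one)
    ultimately show ?thesis using \<tau> by simp
  qed
  have "p * ((1 - \<tau>)\<^sup>2 * Ax) + (1 - p) * ((1 - \<tau>)\<^sup>2 * A)
      \<le> (1 - \<tau>)\<^sup>2 * ((p + \<tau> / 2) * A + cB * B) + (1 - p) * ((1 - \<tau>)\<^sup>2 * A)"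
    using mult_left_mono[OF pAx zero_le_power2] by (simp add: mult.left_commute)
  also have "\<dots> = (1 - \<tau>)\<^sup>2 * (1 + \<tau> / 2) * A + (1 - \<tau>)\<^sup>2 * (cB * B)"
    by (simp add: algebra_simps)
  also have "\<dots> \<le> (1 - \<tau> / 2) * A + cB * (4 * L * D + 2 * L\<^sup>2 * d)"
  proof (rule add_mono)
    show "(1 - \<tau>)\<^sup>2 * (1 + \<tau> / 2) * A \<le> (1 - \<tau> / 2) * A" by (rule mult_right_mono[OF contraction A])
    have "(1 - \<tau>)\<^sup>2 \<le> 1" using \<tau> by (simp add: power_le_one)
    then have "(1 - \<tau>)\<^sup>2 * (cB * B) \<le> cB * B" using cB B by (simp add: mult_left_le_one_le)
    also have "\<dots> \<le> cB * (4 * L * D + 2 * L\<^sup>2 * d)" by (rule mult_left_mono[OF hB cB])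
    finally show "(1 - \<tau>)\<^sup>2 * (cB * B) \<le> cB * (4 * L * D + 2 * L\<^sup>2 * d)" .
  qed
  also have "\<dots> = (1 - \<tau> / 2) * A + 4 * p * (1 + 2 * p / \<tau>) * L * D + 2 * p * (1 + 2 * p / \<tau>) * L\<^sup>2 * d"
    by (simp add: cB_def algebra_simps)
  finally show ?thesis .
qed

lemma residual_mixture_arith:
  fixes p c H Hx R :: real
  assumes p: "0 \<le> p" "p \<le> 1" and c: "0 \<le> c" and H: "0 \<le> H" and hHx: "Hx \<le> 2 * H + R"
  shows "p * (c * Hx) + (1 - p) * (c * H) \<le> 2 * c * H + p * c * R"
proof -
  have "p * (c * Hx) \<le> p * (c * (2 * H + R))" using hHx p c by (simp add: mult_left_mono)
  moreover have "(1 + p) * (c * H) \<le> 2 * (c * H)" using p c H by (intro mult_right_mono) auto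
  ultimately show ?thesis by (simp add: algebra_simps)
qed

lemma variance_recursion_arith:
  fixes p \<tau> \<omega> L Lmax Lhat D A Ax B H Hx d n :: real
  assumes p: "0 < p" "p \<le> 1" and \<tau>: "0 < \<tau>" "\<tau> \<le> 1" and \<omega>: "0 \<le> \<omega>" and n: "1 \<le> n"
    and nonneg: "0 \<le> A" "0 \<le> B" "0 \<le> H"
    and hAx: "Ax \<le> (1 + \<tau> / (2 * p)) * A + (1 + 2 * p / \<tau>) * B"
    and hB: "B \<le> 4 * L * D + 2 * L\<^sup>2 * d"
    and hHx: "Hx \<le> 2 * H + 8 * Lmax * n * D + 4 * n * Lhat\<^sup>2 * d"
  shows "p * ((1 - \<tau>)\<^sup>2 * Ax + \<tau>\<^sup>2 * \<omega> / n\<^sup>2 * Hx) + (1 - p) * ((1 - \<tau>)\<^sup>2 * A + \<tau>\<^sup>2 * \<omega> / n\<^sup>2 * H)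
     \<le> (1 - \<tau> / 2) * A + 2 * \<tau>\<^sup>2 * \<omega> / n\<^sup>2 * H
        + (4 * p * (1 + 2 * p / \<tau>) * L + 8 * p * \<tau>\<^sup>2 * \<omega> * Lmax / n) * D
        + (2 * p * (1 + 2 * p / \<tau>) * L\<^sup>2 + 4 * p * \<tau>\<^sup>2 * \<omega> * Lhat\<^sup>2 / n) * d"
proof -
  have "p * (\<tau>\<^sup>2 * \<omega> / n\<^sup>2 * Hx) + (1 - p) * (\<tau>\<^sup>2 * \<omega> / n\<^sup>2 * H)
      \<le> 2 * (\<tau>\<^sup>2 * \<omega> / n\<^sup>2) * H + p * (\<tau>\<^sup>2 * \<omega> / n\<^sup>2) * (8 * Lmax * n * D + 4 * n * Lhat\<^sup>2 * d)"
    using p \<omega> nonneg(3) hHx by (intro residual_mixture_arith) (auto simp: add.assoc)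
  also have "p * (\<tau>\<^sup>2 * \<omega> / n\<^sup>2) * (8 * Lmax * n * D + 4 * n * Lhat\<^sup>2 * d)
      = 8 * p * \<tau>\<^sup>2 * \<omega> * Lmax / n * D + 4 * p * \<tau>\<^sup>2 * \<omega> * Lhat\<^sup>2 / n * d"
    using n by (simp add: field_simps power2_eq_square)
  finally show ?thesis
    using young_mixture_arith[OF p \<tau> nonneg(1,2) hAx hB] by (simp add: algebra_simps)
qed

lemma compressed_momentum_error_mixture_le:
  fixes n :: nat and fi :: "nat \<Rightarrow> 'a::euclidean_space \<Rightarrow> real" and gf :: "nat \<Rightarrow> 'a \<Rightarrow> 'a"
  defines "f \<equiv> \<lambda>x. (1 / real n) * (\<Sum>i<n. fi i x)"
    and "gradf \<equiv> \<lambda>x. (1 / real n) *\<^sub>R (\<Sum>i<n. gf i x)"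
  assumes n: "1 \<le> n"
    and smooth: "\<forall>i<n. lsmooth (Li i) (fi i) (gf i)" and convex: "\<forall>i<n. convex_on UNIV (fi i)"
    and Lmax: "\<forall>i<n. Li i \<le> Lmax"
    and Lhat: "\<forall>x y. (1 / real n) * (\<Sum>i<n. (norm (gf i x - gf i y))\<^sup>2) \<le> Lhat\<^sup>2 * (norm (x - y))\<^sup>2"
    and smooth_f: "lsmooth L f gradf" and convex_f: "convex_on UNIV f"
    and p: "0 < p" "p \<le> 1" and \<tau>: "0 < \<tau>" "\<tau> \<le> 1" and \<omega>: "0 \<le> \<omega>"
  shows "p * compressed_momentum_error n gf \<tau> \<omega> v h x + (1 - p) * compressed_momentum_error n gf \<tau> \<omega> v h z
    \<le> (1 - \<tau> / 2) * (norm (v - gradf z))\<^sup>2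
       + 2 * \<tau>\<^sup>2 * \<omega> / (real n)\<^sup>2 * (\<Sum>i<n. (norm (h i - gf i z))\<^sup>2)
       + (4 * p * (1 + 2 * p / \<tau>) * L + 8 * p * \<tau>\<^sup>2 * \<omega> * Lmax / real n) * bregman f gradf z y
       + (2 * p * (1 + 2 * p / \<tau>) * L\<^sup>2 + 4 * p * \<tau>\<^sup>2 * \<omega> * Lhat\<^sup>2 / real n) * (norm (x - y))\<^sup>2"
proof -
  have young: "(norm (v - gradf x))\<^sup>2
      \<le> (1 + \<tau> / (2 * p)) * (norm (v - gradf z))\<^sup>2 + (1 + 2 * p / \<tau>) * (norm (gradf z - gradf x))\<^sup>2"
    using norm_add_sq_le_weighted[of "\<tau> / (2 * p)" "v - gradf z" "gradf z - gradf x"] p \<tau> by simp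
  have gradf_diff: "(norm (gradf z - gradf x))\<^sup>2 \<le> 4 * L * bregman f gradf z y + 2 * L\<^sup>2 * (norm (x - y))\<^sup>2"
  proof -
    have "norm (gradf x - gradf y) \<le> L * norm (x - y)" using smooth_f by (simp add: lsmooth_def)
    then have "(norm (gradf x - gradf y))\<^sup>2 \<le> L\<^sup>2 * (norm (x - y))\<^sup>2"
      by (metis norm_ge_zero power_mono power_mult_distrib)
    then show ?thesis using gradient_diff_sq_le_bregman[OF convex_f smooth_f, of z x y] by linarith
  qed
  have residuals: "(\<Sum>i<n. (norm (gf i x - h i))\<^sup>2)
      \<le> 2 * (\<Sum>i<n. (norm (gf i z - h i))\<^sup>2) + 8 * Lmax * real n * bregman f gradf z y
         + 4 * real n * Lhat\<^sup>2 * (norm (x - y))\<^sup>2"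
    using sum_gradient_residual_sq_le[OF smooth convex Lmax Lhat[rule_format] n, where h=h and z=z] n
    unfolding f_def gradf_def bregman_average by (simp add: mult.assoc)
  have "compressed_momentum_error n gf \<tau> \<omega> v h w
      = (1 - \<tau>)\<^sup>2 * (norm (v - gradf w))\<^sup>2 + \<tau>\<^sup>2 * \<omega> / (real n)\<^sup>2 * (\<Sum>i<n. (norm (gf i w - h i))\<^sup>2)" for w
    unfolding compressed_momentum_error_def gradf_def ..
  moreover have "(\<Sum>i<n. (norm (h i - gf i z))\<^sup>2) = (\<Sum>i<n. (norm (gf i z - h i))\<^sup>2)"
    by (simp add: norm_minus_commute)
  moreover have "1 \<le> real n" using n by simp
  ultimately show ?thesis
    using variance_recursion_arith[OF p \<tau> \<omega> _ zero_le_power2 zero_le_power2 sum_nonneg young gradf_diff residuals]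
    by simp
qed

section \<open>Lower integrals and unbiased compressors\<close>

text \<open>The non-negative integral is a lower integral (a supremum over simple functions below the
  integrand), so the comparisons below need no measurability of the integrand.\<close>
lemma nn_integral_pair_le_iterated:
  assumes "sigma_finite_measure N"
  shows "(\<integral>\<^sup>+ z. F z \<partial>(M \<Otimes>\<^sub>M N)) \<le> (\<integral>\<^sup>+ x. (\<integral>\<^sup>+ y. F (x, y) \<partial>N) \<partial>M)"
  unfolding nn_integral_def[of "M \<Otimes>\<^sub>M N"]
proof (rule SUP_least, safe)
  fix g assume g: "simple_function (M \<Otimes>\<^sub>M N) g" "g \<le> F"
  have gm: "g \<in> borel_measurable (M \<Otimes>\<^sub>M N)" using g(1) by (rule borel_measurable_simple_function)
  have "integral\<^sup>S (M \<Otimes>\<^sub>M N) g = integral\<^sup>N (M \<Otimes>\<^sub>M N) g"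
    using g(1) by (simp add: nn_integral_eq_simple_integral)
  also have "\<dots> = (\<integral>\<^sup>+ x. (\<integral>\<^sup>+ y. g (x, y) \<partial>N) \<partial>M)"
    using sigma_finite_measure.nn_integral_fst[OF assms gm] by simp
  also have "\<dots> \<le> (\<integral>\<^sup>+ x. (\<integral>\<^sup>+ y. F (x, y) \<partial>N) \<partial>M)"
    using g(2) by (intro nn_integral_mono) (simp add: le_fun_def)
  finally show "integral\<^sup>S (M \<Otimes>\<^sub>M N) g \<le> (\<integral>\<^sup>+ x. (\<integral>\<^sup>+ y. F (x, y) \<partial>N) \<partial>M)" .
qed

lemma nn_integral_le_pair_fst:
  assumes "prob_space N"
  shows "(\<integral>\<^sup>+ x. h x \<partial>M) \<le> (\<integral>\<^sup>+ z. h (fst z) \<partial>(M \<Otimes>\<^sub>M N))"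
  unfolding nn_integral_def[of M]
proof (rule SUP_least, safe)
  fix g assume g: "simple_function M g" "g \<le> h"
  have gm: "g \<in> borel_measurable M" using g(1) by (rule borel_measurable_simple_function)
  interpret N: prob_space N by fact
  have "integral\<^sup>S M g = integral\<^sup>N M g"
    using g(1) by (simp add: nn_integral_eq_simple_integral)
  also have "\<dots> = (\<integral>\<^sup>+ x. (\<integral>\<^sup>+ y. g (fst (x, y)) \<partial>N) \<partial>M)"
    by (simp add: N.emeasure_space_1)
  also have "\<dots> = (\<integral>\<^sup>+ z. g (fst z) \<partial>(M \<Otimes>\<^sub>M N))"
    using gm by (intro N.nn_integral_fst) (auto intro: measurable_compose[OF measurable_fst])
  also have "\<dots> \<le> (\<integral>\<^sup>+ z. h (fst z) \<partial>(M \<Otimes>\<^sub>M N))"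
    using g(2) by (intro nn_integral_mono) (simp add: le_fun_def)
  finally show "integral\<^sup>S M g \<le> (\<integral>\<^sup>+ z. h (fst z) \<partial>(M \<Otimes>\<^sub>M N))" .
qed

lemma nn_integral_const_add_le:
  assumes "prob_space M"
  shows "(\<integral>\<^sup>+x. a + f x \<partial>M) \<le> a + integral\<^sup>N M f"
  unfolding nn_integral_def_finite[of M "\<lambda>x. a + f x"]
proof (rule SUP_least, clarify)
  interpret prob_space M by fact
  fix g assume g: "simple_function M g" "g \<le> (\<lambda>x. a + f x)" "\<forall>x. g x < top"
  have [measurable]: "g \<in> borel_measurable M" using g(1) by (rule borel_measurable_simple_function)
  have "integral\<^sup>S M g = (\<integral>\<^sup>+x. g x \<partial>M)" using g(1) by (simp add: nn_integral_eq_simple_integral)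
  also have "\<dots> \<le> (\<integral>\<^sup>+x. a + (g x - a) \<partial>M)" by (intro nn_integral_mono) (auto simp: add_diff_self_ennreal not_le)
  also have "\<dots> = a + (\<integral>\<^sup>+x. g x - a \<partial>M)" by (simp add: nn_integral_add emeasure_space_1)
  also have "\<dots> \<le> a + integral\<^sup>N M f"
    using g(2,3) by (intro add_left_mono nn_integral_mono) (auto simp: le_fun_def ennreal_minus_le_iff less_top[symmetric])
  finally show "integral\<^sup>S M g \<le> a + integral\<^sup>N M f" .
qed

lemma nn_integral_cmult_le:
  "(\<integral>\<^sup>+x. ennreal c * h x \<partial>M) \<le> ennreal c * integral\<^sup>N M h"
proof (cases "0 < c")
  case False
  then show ?thesis by (simp add: ennreal_neg)
next
  case True
  have c: "ennreal c * ennreal (1 / c) = 1" using True by (simp flip: ennreal_mult)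
  show ?thesis
    unfolding nn_integral_def[of M "\<lambda>x. ennreal c * h x"]
  proof (rule SUP_least, clarify)
    fix g assume g: "simple_function M g" "g \<le> (\<lambda>x. ennreal c * h x)"
    have [measurable]: "g \<in> borel_measurable M" using g(1) by (rule borel_measurable_simple_function)
    have "integral\<^sup>S M g = ennreal c * (\<integral>\<^sup>+x. ennreal (1 / c) * g x \<partial>M)"
      using g(1) c by (simp add: nn_integral_eq_simple_integral nn_integral_cmult flip: mult.assoc)
    also have "\<dots> \<le> ennreal c * integral\<^sup>N M h"
    proof (intro mult_left_mono nn_integral_mono)
      fix x
      have "ennreal (1 / c) * g x \<le> ennreal (1 / c) * (ennreal c * h x)"
        using g(2) by (intro mult_left_mono) (auto simp: le_fun_def)
      then show "ennreal (1 / c) * g x \<le> h x" using c by (simp add: mult.assoc[symmetric] mult.commute)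
    qed simp
    finally show "integral\<^sup>S M g \<le> ennreal c * integral\<^sup>N M h" .
  qed
qed

lemma nn_integral_norm_sq_add_centered:
  fixes e :: "'s \<Rightarrow> 'a::euclidean_space"
  assumes S: "prob_space S" and em: "e \<in> borel_measurable S" and ei: "integrable S e"
    and e0: "(\<integral>s. e s \<partial>S) = 0"
    and fin: "(\<integral>\<^sup>+s. ennreal ((norm (e s))\<^sup>2) \<partial>S) < \<infinity>"
  shows "(\<integral>\<^sup>+s. ennreal ((norm (w + e s))\<^sup>2) \<partial>S) = ennreal ((norm w)\<^sup>2) + (\<integral>\<^sup>+s. ennreal ((norm (e s))\<^sup>2) \<partial>S)"
proof -
  interpret prob_space S by fact
  have i2: "integrable S (\<lambda>s. (norm (e s))\<^sup>2)"
    using em fin by (intro integrableI_bounded) auto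
  have eq: "(norm (w + e s))\<^sup>2 = (norm w)\<^sup>2 + 2 * (w \<bullet> e s) + (norm (e s))\<^sup>2" for s
    by (simp add: power2_norm_eq_inner inner_add_left inner_add_right inner_commute)
  have i3: "integrable S (\<lambda>s. (norm w)\<^sup>2 + 2 * (w \<bullet> e s) + (norm (e s))\<^sup>2)"
    using ei i2 by (intro Bochner_Integration.integrable_add integrable_mult_right integrable_inner_right) auto
  have "(\<integral>\<^sup>+s. ennreal ((norm (w + e s))\<^sup>2) \<partial>S) = ennreal (\<integral>s. (norm w)\<^sup>2 + 2 * (w \<bullet> e s) + (norm (e s))\<^sup>2 \<partial>S)"
    unfolding eq using i3 by (intro nn_integral_eq_integral) (auto simp flip: eq)
  also have "(\<integral>s. (norm w)\<^sup>2 + 2 * (w \<bullet> e s) + (norm (e s))\<^sup>2 \<partial>S) = (norm w)\<^sup>2 + (\<integral>s. (norm (e s))\<^sup>2 \<partial>S)"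
    using ei i2 e0 by (simp add: prob_space)
  also have "ennreal \<dots> = ennreal ((norm w)\<^sup>2) + (\<integral>\<^sup>+s. ennreal ((norm (e s))\<^sup>2) \<partial>S)"
    using i2 by (simp add: nn_integral_eq_integral)
  finally show ?thesis .
qed

lemma nn_integral_PiM_norm_sq_add_sum_centered:
  fixes e :: "'i \<Rightarrow> 's \<Rightarrow> 'a::euclidean_space"
  assumes M: "\<And>i. prob_space (M i)" and I: "finite I"
    and em: "\<And>i. i \<in> I \<Longrightarrow> e i \<in> borel_measurable (M i)"
    and ei: "\<And>i. i \<in> I \<Longrightarrow> integrable (M i) (e i)"
    and e0: "\<And>i. i \<in> I \<Longrightarrow> (\<integral>s. e i s \<partial>M i) = 0"
    and fin: "\<And>i. i \<in> I \<Longrightarrow> (\<integral>\<^sup>+s. ennreal ((norm (e i s))\<^sup>2) \<partial>M i) < \<infinity>"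
  shows "(\<integral>\<^sup>+x. ennreal ((norm (u + (\<Sum>i\<in>I. e i (x i))))\<^sup>2) \<partial>PiM I M)
     = ennreal ((norm u)\<^sup>2) + (\<Sum>i\<in>I. \<integral>\<^sup>+s. ennreal ((norm (e i s))\<^sup>2) \<partial>M i)"
  using I em ei e0 fin
proof (induction I rule: finite_induct)
  case empty
  interpret prob_space "PiM {} M" by (rule prob_space_PiM) (use M in auto)
  show ?case by (simp add: emeasure_space_1)
next
  case (insert i I)
  interpret product_sigma_finite M
    unfolding product_sigma_finite_def using M by (auto intro: prob_space_imp_sigma_finite)
  have emI[measurable]: "\<And>j. j \<in> insert i I \<Longrightarrow> e j \<in> borel_measurable (M j)" by (rule insert.prems)
  have meas: "(\<lambda>x. ennreal ((norm (u + (\<Sum>j\<in>insert i I. e j (x j))))\<^sup>2)) \<in> borel_measurable (PiM (insert i I) M)"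
    using emI by measurable
  have "(\<integral>\<^sup>+x. ennreal ((norm (u + (\<Sum>j\<in>insert i I. e j (x j))))\<^sup>2) \<partial>PiM (insert i I) M)
      = (\<integral>\<^sup>+x. (\<integral>\<^sup>+y. ennreal ((norm (u + (\<Sum>j\<in>insert i I. e j ((x(i:=y)) j))))\<^sup>2) \<partial>M i) \<partial>PiM I M)"
    by (rule product_nn_integral_insert[OF insert.hyps(1,2) meas])
  also have "\<dots> = (\<integral>\<^sup>+x. ennreal ((norm (u + (\<Sum>j\<in>I. e j (x j))))\<^sup>2) + (\<integral>\<^sup>+s. ennreal ((norm (e i s))\<^sup>2) \<partial>M i) \<partial>PiM I M)"
  proof (rule nn_integral_cong)
    fix x
    have "(\<Sum>j\<in>insert i I. e j ((x(i:=y)) j)) = e i y + (\<Sum>j\<in>I. e j (x j))" for y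
      using insert.hyps by (auto intro!: sum.cong)
    then show "(\<integral>\<^sup>+y. ennreal ((norm (u + (\<Sum>j\<in>insert i I. e j ((x(i:=y)) j))))\<^sup>2) \<partial>M i) =
        ennreal ((norm (u + (\<Sum>j\<in>I. e j (x j))))\<^sup>2) + (\<integral>\<^sup>+s. ennreal ((norm (e i s))\<^sup>2) \<partial>M i)"
      using nn_integral_norm_sq_add_centered[OF M insert.prems(1-4)[of i], of "u + (\<Sum>j\<in>I. e j (x j))"]
      by (simp add: add.assoc add.commute add.left_commute)
  qed
  also have "\<dots> = (\<integral>\<^sup>+x. ennreal ((norm (u + (\<Sum>j\<in>I. e j (x j))))\<^sup>2) \<partial>PiM I M) + (\<integral>\<^sup>+s. ennreal ((norm (e i s))\<^sup>2) \<partial>M i)"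
  proof -
    interpret P: prob_space "PiM I M" by (rule prob_space_PiM) (use M in auto)
    have m2: "(\<lambda>x. ennreal ((norm (u + (\<Sum>j\<in>I. e j (x j))))\<^sup>2)) \<in> borel_measurable (PiM I M)"
      using emI by measurable
    show ?thesis using m2 by (simp add: nn_integral_add P.emeasure_space_1)
  qed
  also have "\<dots> = ennreal ((norm u)\<^sup>2) + (\<Sum>j\<in>insert i I. \<integral>\<^sup>+s. ennreal ((norm (e j s))\<^sup>2) \<partial>M j)"
    using insert by (simp add: add.assoc add.commute)
  finally show ?case .
qed

lemma unbiased_compressor_measurable:
  assumes "unbiased_compressor \<omega> S C"
  shows "(\<lambda>s. C s x) \<in> borel_measurable S"
proof -
  have "(\<lambda>(s, x). C s x) \<in> borel_measurable (S \<Otimes>\<^sub>M borel)"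
    using assms by (simp add: unbiased_compressor_def)
  moreover have "(\<lambda>s. (s, x)) \<in> S \<rightarrow>\<^sub>M S \<Otimes>\<^sub>M borel" by measurable
  ultimately show ?thesis using measurable_compose by fastforce
qed

lemma unbiased_compressors_sum_measurable:
  assumes "\<forall>i<n. unbiased_compressor \<omega> (S i) (C i)"
  shows "(\<lambda>s. \<Sum>i<n. C i (s i) (a i)) \<in> borel_measurable (PiM {..<n} S)"
proof (rule borel_measurable_sum)
  fix i assume i: "i \<in> {..<n}"
  have "(\<lambda>s. C i s (a i)) \<in> borel_measurable (S i)"
    using unbiased_compressor_measurable assms i by blast
  then show "(\<lambda>s. C i (s i) (a i)) \<in> borel_measurable (PiM {..<n} S)"
    using measurable_compose[OF measurable_component_singleton[OF i]] by blast
qed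

lemma nn_integral_unbiased_compressor_error:
  assumes C: "unbiased_compressor \<omega> S C"
  shows "(\<integral>\<^sup>+s. ennreal ((norm (c *\<^sub>R (C s a - a)))\<^sup>2) \<partial>S) \<le> ennreal (c\<^sup>2 * \<omega> * (norm a)\<^sup>2)"
proof -
  have [measurable]: "(\<lambda>s. C s a) \<in> borel_measurable S" by (rule unbiased_compressor_measurable[OF C])
  have "(\<integral>\<^sup>+s. ennreal ((norm (c *\<^sub>R (C s a - a)))\<^sup>2) \<partial>S)
      = (\<integral>\<^sup>+s. ennreal (c\<^sup>2) * ennreal ((norm (C s a - a))\<^sup>2) \<partial>S)"
    by (simp add: power_mult_distrib ennreal_mult)
  also have "\<dots> = ennreal (c\<^sup>2) * (\<integral>\<^sup>+s. ennreal ((norm (C s a - a))\<^sup>2) \<partial>S)"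
    by (rule nn_integral_cmult) measurable
  also have "\<dots> \<le> ennreal (c\<^sup>2) * ennreal (\<omega> * (norm a)\<^sup>2)"
    using C by (intro mult_left_mono) (auto simp: unbiased_compressor_def)
  also have "\<dots> = ennreal (c\<^sup>2 * \<omega> * (norm a)\<^sup>2)"
    using C by (simp add: unbiased_compressor_def ennreal_mult mult.assoc)
  finally show ?thesis .
qed

lemma nn_integral_unbiased_compressors_error_sum:
  fixes C :: "nat \<Rightarrow> 's \<Rightarrow> 'a::euclidean_space \<Rightarrow> 'a"
  assumes C: "\<forall>i<n. unbiased_compressor \<omega> (S i) (C i)"
  shows "(\<integral>\<^sup>+s. ennreal ((norm (u + (\<Sum>i<n. c *\<^sub>R (C i (s i) (a i) - a i))))\<^sup>2) \<partial>PiM {..<n} S)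
    \<le> ennreal ((norm u)\<^sup>2 + c\<^sup>2 * \<omega> * (\<Sum>i<n. (norm (a i))\<^sup>2))"
proof -
  \<comment> \<open>Product-measure lemmas require every factor, also outside the index set, to be a probability space.\<close>
  define S' where "S' i = (if i < n then S i else measure_pmf (return_pmf undefined))" for i
  define e where "e = (\<lambda>i s. c *\<^sub>R (C i s (a i) - a i))"
  have S': "prob_space (S' i)" for i
    using C by (auto simp: S'_def unbiased_compressor_def intro: prob_space_measure_pmf)
  have \<omega>: "0 \<le> \<omega>" if "i < n" for i using C that by (simp add: unbiased_compressor_def)
  have e_bound: "(\<integral>\<^sup>+s. ennreal ((norm (e i s))\<^sup>2) \<partial>S' i) \<le> ennreal (c\<^sup>2 * \<omega> * (norm (a i))\<^sup>2)"
    if "i \<in> {..<n}" for i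
    using nn_integral_unbiased_compressor_error[of \<omega> "S i" "C i"] C that by (simp add: S'_def e_def)
  have "(\<integral>\<^sup>+s. ennreal ((norm (u + (\<Sum>i<n. e i (s i))))\<^sup>2) \<partial>PiM {..<n} S')
      = ennreal ((norm u)\<^sup>2) + (\<Sum>i<n. \<integral>\<^sup>+s. ennreal ((norm (e i s))\<^sup>2) \<partial>S' i)"
  proof (rule nn_integral_PiM_norm_sq_add_sum_centered[OF S'])
    fix i assume i: "i \<in> {..<n}"
    then interpret prob_space "S i" using C by (simp add: unbiased_compressor_def)
    have int: "integrable (S i) (\<lambda>s. C i s (a i))" "(\<integral>s. C i s (a i) \<partial>S i) = a i"
      using C i by (auto simp: unbiased_compressor_def)
    have [measurable]: "(\<lambda>s. C i s (a i)) \<in> borel_measurable (S i)"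
      using unbiased_compressor_measurable C i by blast
    show "e i \<in> borel_measurable (S' i)" using i unfolding e_def S'_def by simp measurable
    show "integrable (S' i) (e i)" using int i by (simp add: S'_def e_def)
    show "(\<integral>s. e i s \<partial>S' i) = 0"
      using int i by (simp add: S'_def e_def prob_space)
    show "(\<integral>\<^sup>+s. ennreal ((norm (e i s))\<^sup>2) \<partial>S' i) < \<infinity>"
      using e_bound[OF i] by (simp add: le_less_trans)
  qed simp
  also have "\<dots> \<le> ennreal ((norm u)\<^sup>2) + (\<Sum>i<n. ennreal (c\<^sup>2 * \<omega> * (norm (a i))\<^sup>2))"
    using e_bound by (intro add_left_mono sum_mono) auto
  also have "(\<Sum>i<n. ennreal (c\<^sup>2 * \<omega> * (norm (a i))\<^sup>2)) = ennreal (\<Sum>i<n. c\<^sup>2 * \<omega> * (norm (a i))\<^sup>2)"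
    using \<omega> by (intro sum_ennreal) auto
  also have "ennreal ((norm u)\<^sup>2) + \<dots> = ennreal ((norm u)\<^sup>2 + c\<^sup>2 * \<omega> * (\<Sum>i<n. (norm (a i))\<^sup>2))"
    using \<omega> by (subst ennreal_plus[symmetric]) (auto intro!: sum_nonneg simp: sum_distrib_left)
  also have "PiM {..<n} S' = PiM {..<n} S" by (rule PiM_cong) (auto simp: S'_def)
  finally show ?thesis by (simp add: e_def)
qed

lemma nn_integral_compressed_momentum_le:
  fixes C :: "nat \<Rightarrow> 's \<Rightarrow> 'a::euclidean_space \<Rightarrow> 'a"
  assumes C: "\<forall>i<n. unbiased_compressor \<omega> (S i) (C i)"
  shows "(\<integral>\<^sup>+s. ennreal ((norm ((1 - \<tau>) *\<^sub>R v
      + \<tau> *\<^sub>R ((1 / real n) *\<^sub>R (\<Sum>i<n. h i) + (1 / real n) *\<^sub>R (\<Sum>i<n. C i (s i) (gf i z - h i)))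
      - (1 / real n) *\<^sub>R (\<Sum>i<n. gf i z)))\<^sup>2) \<partial>PiM {..<n} S)
    \<le> ennreal (compressed_momentum_error n gf \<tau> \<omega> v h z)"
proof -
  let ?a = "\<lambda>i. gf i z - h i"
  have "(1 - \<tau>) *\<^sub>R v + \<tau> *\<^sub>R ((1 / real n) *\<^sub>R (\<Sum>i<n. h i) + (1 / real n) *\<^sub>R (\<Sum>i<n. C i (s i) (?a i)))
        - (1 / real n) *\<^sub>R (\<Sum>i<n. gf i z)
      = (1 - \<tau>) *\<^sub>R (v - (1 / real n) *\<^sub>R (\<Sum>i<n. gf i z)) + (\<Sum>i<n. (\<tau> / real n) *\<^sub>R (C i (s i) (?a i) - ?a i))"
    for s
  proof -
    have "(\<tau> / real n) *\<^sub>R w + ((1 - \<tau>) / real n) *\<^sub>R w = (1 / real n) *\<^sub>R w" for w :: 'a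
      by (simp add: scaleR_add_left[symmetric] add_divide_distrib[symmetric])
    then show ?thesis
      by (simp add: scaleR_sum_right[symmetric] sum_subtractf sum.distrib algebra_simps)
  qed
  then have "(\<integral>\<^sup>+s. ennreal ((norm ((1 - \<tau>) *\<^sub>R v
      + \<tau> *\<^sub>R ((1 / real n) *\<^sub>R (\<Sum>i<n. h i) + (1 / real n) *\<^sub>R (\<Sum>i<n. C i (s i) (gf i z - h i)))
      - (1 / real n) *\<^sub>R (\<Sum>i<n. gf i z)))\<^sup>2) \<partial>PiM {..<n} S)
    = (\<integral>\<^sup>+s. ennreal ((norm ((1 - \<tau>) *\<^sub>R (v - (1 / real n) *\<^sub>R (\<Sum>i<n. gf i z))
         + (\<Sum>i<n. (\<tau> / real n) *\<^sub>R (C i (s i) (?a i) - ?a i))))\<^sup>2) \<partial>PiM {..<n} S)"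
    by (simp only:)
  also have "\<dots> \<le> ennreal ((norm ((1 - \<tau>) *\<^sub>R (v - (1 / real n) *\<^sub>R (\<Sum>i<n. gf i z))))\<^sup>2
      + (\<tau> / real n)\<^sup>2 * \<omega> * (\<Sum>i<n. (norm (?a i))\<^sup>2))"
    by (rule nn_integral_unbiased_compressors_error_sum[OF C])
  also have "\<dots> = ennreal (compressed_momentum_error n gf \<tau> \<omega> v h z)"
    by (simp add: compressed_momentum_error_def power_mult_distrib power_divide)
  finally show ?thesis .
qed

lemma nn_integral_coin_mixture_le:
  fixes \<phi> :: "'b \<Rightarrow> 's \<Rightarrow> ennreal"
  assumes M: "prob_space M" and N: "prob_space N" and p: "0 \<le> p" "p \<le> 1"
    and meas: "\<phi> a \<in> borel_measurable M" "\<phi> b \<in> borel_measurable M"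
    and bound: "(\<integral>\<^sup>+s. \<phi> a s \<partial>M) \<le> ennreal ea" "(\<integral>\<^sup>+s. \<phi> b s \<partial>M) \<le> ennreal eb"
    and nonneg: "0 \<le> ea" "0 \<le> eb"
  shows "(\<integral>\<^sup>+(s, r, c). \<phi> (if c then a else b) s \<partial>(M \<Otimes>\<^sub>M (N \<Otimes>\<^sub>M measure_pmf (bernoulli_pmf p))))
    \<le> ennreal (p * ea + (1 - p) * eb)"
proof -
  let ?B = "measure_pmf (bernoulli_pmf p)"
  have NB: "prob_space (N \<Otimes>\<^sub>M ?B)" using N by (intro prob_space_pair prob_space_measure_pmf)
  have "(\<integral>\<^sup>+(s, r, c). \<phi> (if c then a else b) s \<partial>(M \<Otimes>\<^sub>M (N \<Otimes>\<^sub>M ?B)))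
      \<le> (\<integral>\<^sup>+s. (\<integral>\<^sup>+(r, c). \<phi> (if c then a else b) s \<partial>(N \<Otimes>\<^sub>M ?B)) \<partial>M)"
    using nn_integral_pair_le_iterated[OF prob_space_imp_sigma_finite[OF NB],
        of M "\<lambda>(s, r, c). \<phi> (if c then a else b) s"]
    by simp
  also have "\<dots> \<le> (\<integral>\<^sup>+s. \<phi> a s * ennreal p + \<phi> b s * ennreal (1 - p) \<partial>M)"
  proof (rule nn_integral_mono)
    fix s
    have "(\<integral>\<^sup>+(r, c). \<phi> (if c then a else b) s \<partial>(N \<Otimes>\<^sub>M ?B))
        \<le> (\<integral>\<^sup>+r. (\<integral>\<^sup>+c. \<phi> (if c then a else b) s \<partial>?B) \<partial>N)"
      using nn_integral_pair_le_iterated[of ?B N "\<lambda>(r, c). \<phi> (if c then a else b) s"]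
      by (simp add: prob_space_imp_sigma_finite prob_space_measure_pmf)
    also have "\<dots> = \<phi> a s * ennreal p + \<phi> b s * ennreal (1 - p)"
      using p N by (simp add: prob_space.emeasure_space_1)
    finally show "(\<integral>\<^sup>+(r, c). \<phi> (if c then a else b) s \<partial>(N \<Otimes>\<^sub>M ?B)) \<le> \<phi> a s * ennreal p + \<phi> b s * ennreal (1 - p)" .
  qed
  also have "\<dots> = (\<integral>\<^sup>+s. \<phi> a s \<partial>M) * ennreal p + (\<integral>\<^sup>+s. \<phi> b s \<partial>M) * ennreal (1 - p)"
    using meas by (simp add: nn_integral_add nn_integral_multc)
  also have "\<dots> \<le> ennreal ea * ennreal p + ennreal eb * ennreal (1 - p)"
    using bound by (intro add_mono mult_right_mono) auto
  also have "\<dots> = ennreal (ea * p) + ennreal (eb * (1 - p))"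
    using p nonneg by (simp add: ennreal_mult)
  also have "\<dots> = ennreal (p * ea + (1 - p) * eb)"
    using p nonneg by (simp add: mult.commute)
  finally show ?thesis .
qed

lemma nn_integral_pair_le_affine:
  assumes M: "prob_space M" and N: "prob_space N" and c: "0 \<le> c"
    and bound: "\<And>x. (\<integral>\<^sup>+y. F (x, y) \<partial>N) \<le> ennreal (K + c * H x)"
  shows "(\<integral>\<^sup>+\<xi>. F \<xi> \<partial>(M \<Otimes>\<^sub>M N)) \<le> ennreal K + ennreal c * (\<integral>\<^sup>+\<xi>. ennreal (H (fst \<xi>)) \<partial>(M \<Otimes>\<^sub>M N))"
proof -
  have "(\<integral>\<^sup>+\<xi>. F \<xi> \<partial>(M \<Otimes>\<^sub>M N)) \<le> (\<integral>\<^sup>+x. (\<integral>\<^sup>+y. F (x, y) \<partial>N) \<partial>M)"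
    using N by (intro nn_integral_pair_le_iterated prob_space_imp_sigma_finite)
  also have "\<dots> \<le> (\<integral>\<^sup>+x. ennreal K + ennreal c * ennreal (H x) \<partial>M)"
  proof (rule nn_integral_mono)
    fix x
    have "ennreal (K + c * H x) \<le> ennreal K + ennreal (c * H x)"
      by (simp add: ennreal_plus_if ennreal_leI)
    with bound[of x] c show "(\<integral>\<^sup>+y. F (x, y) \<partial>N) \<le> ennreal K + ennreal c * ennreal (H x)"
      by (simp add: ennreal_mult')
  qed
  also have "\<dots> \<le> ennreal K + (\<integral>\<^sup>+x. ennreal c * ennreal (H x) \<partial>M)"
    by (rule nn_integral_const_add_le[OF M])
  also have "\<dots> \<le> ennreal K + ennreal c * (\<integral>\<^sup>+x. ennreal (H x) \<partial>M)"
    by (intro add_left_mono nn_integral_cmult_le)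
  also have "\<dots> \<le> ennreal K + ennreal c * (\<integral>\<^sup>+\<xi>. ennreal (H (fst \<xi>)) \<partial>(M \<Otimes>\<^sub>M N))"
    by (intro add_left_mono mult_left_mono nn_integral_le_pair_fst[OF N]) auto
  finally show ?thesis .
qed

section \<open>Algorithm 2Direction\<close>

lemma st_hb_alg_run:
  "st_hb (alg_run P t hist) = (1 / real (a_n P)) *\<^sub>R (\<Sum>i<a_n P. st_h (alg_run P t hist) i)"
proof (induction t)
  case 0
  then show ?case by (simp add: alg_init_def)
next
  case (Suc t)
  then show ?case
    by (cases "hist t") (simp add: alg_step_def Let_def scaleR_sum_right sum.distrib algebra_simps)
qed

lemma alg_x_seed_independent:
  "alg_x P t st (sy, r) = alg_x P t st (sy, r')"
  by (simp add: alg_x_def alg_u_def alg_g_def Let_def)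

lemma alg_step_z_v:
  fixes P :: "('a::euclidean_space, 's) alg_params" and t :: nat and st :: "'a alg_state"
    and sy sz :: "nat \<Rightarrow> 's" and sP :: 's and c :: bool
  defines "z' \<equiv> if c then alg_x P t st (sy, sz, sP, c) else st_z st"
  shows "st_z (alg_step P t st (sy, sz, sP, c)) = z'"
    and "st_v (alg_step P t st (sy, sz, sP, c)) = (1 - a_tau P) *\<^sub>R st_v st
           + a_tau P *\<^sub>R (st_hb st + (1 / real (a_n P)) *\<^sub>R (\<Sum>i<a_n P. a_Cz P i (sz i) (a_grad P i z' - st_h st i)))"
  by (simp_all add: alg_step_def z'_def Let_def)

lemma nn_integral_alg_step_momentum_error_cond_le:
  fixes P :: "('a::euclidean_space, 's) alg_params" and st :: "'a alg_state"
  defines "gradf \<equiv> \<lambda>x. (1 / real (a_n P)) *\<^sub>R (\<Sum>i<a_n P. a_grad P i x)"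
    and "E \<equiv> compressed_momentum_error (a_n P) (a_grad P) (a_tau P) (a_omega P) (st_v st) (st_h st)"
  assumes Cz: "\<forall>i<a_n P. unbiased_compressor (a_omega P) (Sz i) (a_Cz P i)" and n: "0 < a_n P"
    and SP: "prob_space SP" and p: "0 \<le> p" "p \<le> 1"
    and hb: "st_hb st = (1 / real (a_n P)) *\<^sub>R (\<Sum>i<a_n P. st_h st i)"
  shows "(\<integral>\<^sup>+r. ennreal ((norm (st_v (alg_step P t st (sy, r)) - gradf (st_z (alg_step P t st (sy, r)))))\<^sup>2)
            \<partial>(PiM {..<a_n P} Sz \<Otimes>\<^sub>M (SP \<Otimes>\<^sub>M measure_pmf (bernoulli_pmf p))))
    \<le> ennreal (p * E (alg_x P t st (sy, r0)) + (1 - p) * E (st_z st))"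
proof -
  define \<phi> where "\<phi> z' sz = ennreal ((norm ((1 - a_tau P) *\<^sub>R st_v st
      + a_tau P *\<^sub>R (st_hb st + (1 / real (a_n P)) *\<^sub>R (\<Sum>i<a_n P. a_Cz P i (sz i) (a_grad P i z' - st_h st i)))
      - gradf z'))\<^sup>2)" for z' sz
  have \<omega>: "0 \<le> a_omega P" using Cz n by (simp add: unbiased_compressor_def)
  have "prob_space (Sz i)" if "i < a_n P" for i using Cz that by (simp add: unbiased_compressor_def)
  then have Sz: "prob_space (PiM {..<a_n P} Sz)" by (intro prob_space_PiM) auto
  have meas: "\<phi> z' \<in> borel_measurable (PiM {..<a_n P} Sz)" for z'
    using unbiased_compressors_sum_measurable[OF Cz, where a="\<lambda>i. a_grad P i z' - st_h st i"]
    unfolding \<phi>_def by measurable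
  have bound: "(\<integral>\<^sup>+sz. \<phi> z' sz \<partial>PiM {..<a_n P} Sz) \<le> ennreal (E z')" for z'
    unfolding \<phi>_def E_def gradf_def hb by (rule nn_integral_compressed_momentum_le[OF Cz])
  have "(\<integral>\<^sup>+r. ennreal ((norm (st_v (alg_step P t st (sy, r)) - gradf (st_z (alg_step P t st (sy, r)))))\<^sup>2)
            \<partial>(PiM {..<a_n P} Sz \<Otimes>\<^sub>M (SP \<Otimes>\<^sub>M measure_pmf (bernoulli_pmf p))))
      = (\<integral>\<^sup>+(sz, sP, c). \<phi> (if c then alg_x P t st (sy, r0) else st_z st) sz
            \<partial>(PiM {..<a_n P} Sz \<Otimes>\<^sub>M (SP \<Otimes>\<^sub>M measure_pmf (bernoulli_pmf p))))"
  proof (intro nn_integral_cong)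
    fix r :: "(nat \<Rightarrow> 's) \<times> 's \<times> bool"
    obtain sz sP c where r: "r = (sz, sP, c)" by (cases r) auto
    show "ennreal ((norm (st_v (alg_step P t st (sy, r)) - gradf (st_z (alg_step P t st (sy, r)))))\<^sup>2)
        = (case r of (sz, sP, c) \<Rightarrow> \<phi> (if c then alg_x P t st (sy, r0) else st_z st) sz)"
      unfolding r
      by (cases c) (simp_all add: \<phi>_def alg_step_z_v alg_x_seed_independent[of _ _ _ sy "(sz, sP, True)" r0])
  qed
  also have "\<dots> \<le> ennreal (p * E (alg_x P t st (sy, r0)) + (1 - p) * E (st_z st))"
    using nn_integral_coin_mixture_le[OF Sz SP p meas meas bound bound] \<omega>
    by (simp add: E_def compressed_momentum_error_nonneg)
  finally show ?thesis .
qed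

lemma nn_integral_alg_step_momentum_error_le:
  fixes P :: "('a::euclidean_space, 's) alg_params" and st :: "'a alg_state"
    and n :: nat and gf :: "nat \<Rightarrow> 'a \<Rightarrow> 'a" and Cz :: "nat \<Rightarrow> 's \<Rightarrow> 'a \<Rightarrow> 'a" and \<tau> \<omega> :: real
  defines "gradf \<equiv> \<lambda>x. (1 / real n) *\<^sub>R (\<Sum>i<n. gf i x)"
    and "E \<equiv> compressed_momentum_error n gf \<tau> \<omega> (st_v st) (st_h st)"
  assumes fields: "a_n P = n" "a_grad P = gf" "a_tau P = \<tau>" "a_omega P = \<omega>" "a_Cz P = Cz"
    and Sy: "\<forall>i<n. prob_space (Sy i)" and Cz: "\<forall>i<n. unbiased_compressor \<omega> (Sz i) (Cz i)" and n: "0 < n"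
    and SP: "prob_space SP" and p: "0 \<le> p" "p \<le> 1"
    and hb: "st_hb st = (1 / real n) *\<^sub>R (\<Sum>i<n. st_h st i)"
    and c: "0 \<le> c" and det: "\<And>x. p * E x + (1 - p) * E (st_z st) \<le> K + c * (norm (x - y))\<^sup>2"
  shows "(\<integral>\<^sup>+\<xi>. ennreal ((norm (st_v (alg_step P t st \<xi>) - gradf (st_z (alg_step P t st \<xi>))))\<^sup>2)
            \<partial>seed_measure n Sy Sz SP p)
    \<le> ennreal K + ennreal c * (\<integral>\<^sup>+\<xi>. ennreal ((norm (alg_x P t st \<xi> - y))\<^sup>2) \<partial>seed_measure n Sy Sz SP p)"
proof -
  let ?R = "PiM {..<n} Sz \<Otimes>\<^sub>M (SP \<Otimes>\<^sub>M measure_pmf (bernoulli_pmf p))"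
  have R: "prob_space ?R"
    using Cz SP by (auto intro!: prob_space_pair prob_space_PiM prob_space_measure_pmf simp: unbiased_compressor_def)
  have cond: "(\<integral>\<^sup>+r. ennreal ((norm (st_v (alg_step P t st (sy, r)) - gradf (st_z (alg_step P t st (sy, r)))))\<^sup>2) \<partial>?R)
      \<le> ennreal (p * E (alg_x P t st (sy, undefined)) + (1 - p) * E (st_z st))" for sy
    using nn_integral_alg_step_momentum_error_cond_le[of P Sz SP p st t sy undefined] fields Cz n SP p hb
    unfolding gradf_def E_def by simp
  have "(\<integral>\<^sup>+\<xi>. ennreal ((norm (st_v (alg_step P t st \<xi>) - gradf (st_z (alg_step P t st \<xi>))))\<^sup>2)
          \<partial>(PiM {..<n} Sy \<Otimes>\<^sub>M ?R))
      \<le> ennreal K + ennreal c * (\<integral>\<^sup>+\<xi>. ennreal ((norm (alg_x P t st (fst \<xi>, undefined) - y))\<^sup>2)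
          \<partial>(PiM {..<n} Sy \<Otimes>\<^sub>M ?R))"
    using Sy R c order.trans[OF cond ennreal_leI[OF det]]
    by (intro nn_integral_pair_le_affine[where H = "\<lambda>sy. (norm (alg_x P t st (sy, undefined) - y))\<^sup>2"]
        prob_space_PiM) auto
  moreover have "(\<lambda>\<xi>. ennreal ((norm (alg_x P t st (fst \<xi>, undefined) - y))\<^sup>2))
      = (\<lambda>\<xi>. ennreal ((norm (alg_x P t st \<xi> - y))\<^sup>2))"
    by (metis alg_x_seed_independent prod.collapse)
  ultimately show ?thesis by (simp add: seed_measure_def)
qed

theorem lemma10:
  fixes n :: nat
    and fi :: "nat \<Rightarrow> 'a::euclidean_space \<Rightarrow> real" and gf :: "nat \<Rightarrow> 'a \<Rightarrow> 'a"
    and Li :: "nat \<Rightarrow> real" and Lhat L :: real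
    and Lbar mu p Gamma0 tau omega alpha :: real
    and x0 k0 v0 :: 'a and h0 :: "nat \<Rightarrow> 'a"
    and Cy Cz :: "nat \<Rightarrow> 's \<Rightarrow> 'a \<Rightarrow> 'a" and CP :: "'s \<Rightarrow> 'a \<Rightarrow> 'a"
    and Sy Sz :: "nat \<Rightarrow> 's measure" and SP :: "'s measure"
    and t :: nat and hist :: "nat \<Rightarrow> 's seed"
  assumes n_pos: "1 \<le> n"
    and A1_smooth: "\<forall>i<n. lsmooth (Li i) (fi i) (gf i)"
    and A1_Lhat_pos: "0 < Lhat"
    and A1_Lhat: "\<forall>x y. (1 / real n) * (\<Sum>i<n. (norm (gf i x - gf i y))\<^sup>2) \<le> Lhat\<^sup>2 * (norm (x - y))\<^sup>2"
    and A2: "lsmooth L (\<lambda>x. (1 / real n) * (\<Sum>i<n. fi i x)) (\<lambda>x. (1 / real n) *\<^sub>R (\<Sum>i<n. gf i x))"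
    and A3_convex: "\<forall>i<n. convex_on UNIV (fi i)"
    and A3_mu: "0 \<le> mu"
    and A3_strong: "strongly_convex mu (\<lambda>x. (1 / real n) * (\<Sum>i<n. fi i x))"
    and A3_min: "\<exists>xs. \<forall>x. (1 / real n) * (\<Sum>i<n. fi i xs) \<le> (1 / real n) * (\<Sum>i<n. fi i x)"
    and Cy_class: "\<forall>i<n. unbiased_compressor omega (Sy i) (Cy i)"
    and Cz_class: "\<forall>i<n. unbiased_compressor omega (Sz i) (Cz i)"
    and CP_class: "contractive_compressor alpha SP CP"
    and Lbar_pos: "0 < Lbar"
    and p_pos: "0 < p" and p_le: "p \<le> 1"
    and Gamma0_ge: "1 \<le> Gamma0"
    and tau_pos: "0 < tau" and tau_le: "tau \<le> 1"
  defines "P \<equiv> \<lparr> a_n = n, a_grad = gf, a_Lbar = Lbar, a_mu = mu, a_p = p, a_Gamma0 = Gamma0,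
                  a_tau = tau, a_omega = omega, a_alpha = alpha, a_x0 = x0, a_h0 = h0, a_k0 = k0,
                  a_v0 = v0, a_Cy = Cy, a_Cz = Cz, a_CP = CP \<rparr>"
  shows
    "(let f = (\<lambda>x. (1 / real n) * (\<Sum>i<n. fi i x));
          gradf = (\<lambda>x. (1 / real n) *\<^sub>R (\<Sum>i<n. gf i x));
          Lmax = Max (Li ` {..<n});
          \<Xi> = seed_measure n Sy Sz SP p;
          st = alg_run P t hist;
          y' = alg_y P t st
      in (\<integral>\<^sup>+ \<xi>. ennreal ((norm (st_v (alg_step P t st \<xi>) - gradf (st_z (alg_step P t st \<xi>))))\<^sup>2) \<partial>\<Xi>)
         \<le> ennreal ((1 - tau / 2) * (norm (st_v st - gradf (st_z st)))\<^sup>2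
                    + 2 * tau\<^sup>2 * omega / (real n)\<^sup>2 * (\<Sum>i<n. (norm (st_h st i - gf i (st_z st)))\<^sup>2)
                    + (4 * p * (1 + 2 * p / tau) * L + 8 * p * tau\<^sup>2 * omega * Lmax / real n)
                        * bregman f gradf (st_z st) y')
           + ennreal (2 * p * (1 + 2 * p / tau) * L\<^sup>2 + 4 * p * tau\<^sup>2 * omega * Lhat\<^sup>2 / real n)
             * (\<integral>\<^sup>+ \<xi>. ennreal ((norm (alg_x P t st \<xi> - y'))\<^sup>2) \<partial>\<Xi>))"
proof -
  have fields: "a_n P = n" "a_grad P = gf" "a_tau P = tau" "a_omega P = omega" "a_Cz P = Cz"
    unfolding P_def by simp_all
  have Sy: "\<forall>i<n. prob_space (Sy i)" using Cy_class by (simp add: unbiased_compressor_def)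
  have SP: "prob_space SP" using CP_class by (simp add: contractive_compressor_def)
  have \<omega>: "0 \<le> omega" using Cz_class n_pos by (auto simp: unbiased_compressor_def)
  have hb: "st_hb (alg_run P t hist) = (1 / real n) *\<^sub>R (\<Sum>i<n. st_h (alg_run P t hist) i)"
    using st_hb_alg_run[of P t hist] by (simp add: fields)
  have convex_f: "convex_on UNIV (\<lambda>x. (1 / real n) * (\<Sum>i<n. fi i x))"
    by (rule strongly_convex_imp_convex_on[OF A3_mu A3_strong])
  have Lmax: "\<forall>i<n. Li i \<le> Max (Li ` {..<n})" by simp
  show ?thesis
    unfolding Let_def
    by (intro nn_integral_alg_step_momentum_error_le[OF fields Sy Cz_class _ SP _ _ hb]
        compressed_momentum_error_mixture_le[OF n_pos A1_smooth A3_convex Lmax A1_Lhat A2 convex_f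
          p_pos p_le tau_pos tau_le \<omega>])
      (use n_pos p_pos p_le tau_pos \<omega> in auto)
qed

end
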